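(* Let $r\in\mathbb{N}_0$, $m\in\mathbb{N}$ with $k:=m-r\ge 2$, and let $x_0\le x_1\le\dots\le x_m$ be real numbers with $x_j<x_{j+r+1}$ for all $0\le j\le m-r-1$; put $d:=2(x_m-x_0)$. If $\varphi,\omega\in\Phi$ satisfy \[ \varphi(t)\le t^{k-1}\int_t^{d}u^{-k}\omega(u)\,du,\quad t\in(0,d/2],\qquad\text{and}\qquad \varphi(t)\le\omega(t),\quad t\in[d/2,d], \] then \[ \Lambda_r(x_0,\dots,x_{m-1};\varphi)\le c\,(x_m-x_0)\Lambda_r(x_0,\dots,x_m;\omega) \quad\text{and}\quad \Lambda_r(x_1,\dots,x_{m};\varphi)\le c\,(x_m-x_0)\Lambda_r(x_0,\dots,x_m;\omega), \] where the constants $c$ depend only on $k$.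
   Context: $\Phi$ denotes the set of nondecreasing functions $\varphi\in C[0,\infty]$ with $\varphi(0)=0$. For an ordered tuple $y_0\le\dots\le y_n$ (here applied with $n=m$ and $n=m-1$, each tuple with its own endpoints): $\mathcal{Q}_{n,r}:=\{(p,q):0\le p,q\le n,\ q-p\ge r+1\}$, $y_{-1}:=y_0-(y_n-y_0)$, $y_{n+1}:=y_n+(y_n-y_0)$, $d(p,q):=\min\{y_{q+1}-y_p,y_q-y_{p-1}\}$, and for $\varphi\in\Phi$, $\Lambda_{p,q,r}(y_0,\dots,y_n;\varphi):=\frac{\int_{y_q-y_p}^{d(p,q)}u^{p+r-q-1}\varphi(u)du}{\prod_{i=0}^{p-1}(y_q-y_i)\prod_{i=q+1}^{n}(y_i-y_p)}$ (empty products $=1$), $\Lambda_r(y_0,\dots,y_n;\varphi):=\max_{(p,q)\in\mathcal{Q}_{n,r}}\Lambda_{p,q,r}(y_0,\dots,y_n;\varphi)$. *)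

theory Defs
  imports "HOL-Analysis.Analysis"
begin

definition inPhi :: "(real \<Rightarrow> real) \<Rightarrow> bool" where
  "inPhi \<phi> \<longleftrightarrow> continuous_on {0..} \<phi> \<and> mono_on {0..} \<phi> \<and> \<phi> 0 = 0"

definition yext :: "(nat \<Rightarrow> real) \<Rightarrow> nat \<Rightarrow> int \<Rightarrow> real" where
  "yext y n i = (if i < 0 then y 0 - (y n - y 0)
                 else if i > int n then y n + (y n - y 0)
                 else y (nat i))"

definition Qset :: "nat \<Rightarrow> nat \<Rightarrow> (nat \<times> nat) set" where
  "Qset n r = {(p, q). p \<le> n \<and> q \<le> n \<and> q \<ge> p + r + 1}"

definition dpq :: "(nat \<Rightarrow> real) \<Rightarrow> nat \<Rightarrow> nat \<Rightarrow> nat \<Rightarrow> real" where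
  "dpq y n p q = min (yext y n (int q + 1) - y p) (y q - yext y n (int p - 1))"

definition Lambda_pqr ::
  "(nat \<Rightarrow> real) \<Rightarrow> nat \<Rightarrow> nat \<Rightarrow> nat \<Rightarrow> nat \<Rightarrow> (real \<Rightarrow> real) \<Rightarrow> real" where
  "Lambda_pqr y n p q r \<phi> =
     integral {y q - y p .. dpq y n p q} (\<lambda>u. u powi (int p + int r - int q - 1) * \<phi> u)
     / ((\<Prod>i<p. y q - y i) * (\<Prod>i\<in>{q+1..n}. y i - y p))"

definition Lambda :: "nat \<Rightarrow> (nat \<Rightarrow> real) \<Rightarrow> nat \<Rightarrow> (real \<Rightarrow> real) \<Rightarrow> real" where
  "Lambda r y n \<phi> = Max ((\<lambda>(p, q). Lambda_pqr y n p q r \<phi>) ` Qset n r)"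

end

theory Submission
  imports Defs
begin

(* For a pair (p, q) of the shorter tuple put a = x_q - x_p, b = d(p, q), e = q - p - r + 1,
   s = k - e and L = x_m - x_0; then Lambda_{p,q,r}(phi) is the integral of phi(u)/u^e over
   [a, b] divided by the old denominator.  Compare phi(u)/u^e with the truncated weight
   f(t) = min(t, b)^s omega(t)/t^k, which is omega(t)/t^e on (0, b]: on [a, min(b, L)] the first
   hypothesis and a Hardy-type integration by parts, on [L, b] the second hypothesis, give
   int_a^b phi(u)/u^e du <= 2 int_a^2L f.
   The interval [a, 2L] is covered by the intervals [x_qq - x_pp, d(pp, qq)] of the pairs
   pp <= p, q <= qq of the full tuple.  On such an interval each factor of the new denominator
   exceeds the matching old factor, itself at least b, by at most t; this trades the powers of
   min(t, b) for powers of t and bounds f by 2^(k+1) L (old denominator / new denominator) times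
   omega(t)/t^(qq-pp-r+1), whose integral is a multiple of Lambda_{pp,qq,r}(omega).
   The estimate for x_1, ..., x_m follows by the reflection x_i -> -x_(m-i), which preserves
   Lambda. *)

lemma integral_power_div_le:
  fixes a t :: real and s :: nat
  assumes a_pos: "0 < a" and a_le_t: "a \<le> t" and s_or_t: "1 \<le> s \<or> t \<le> 2 * a"
  shows "integral {a..t} (\<lambda>v. v ^ s / v) \<le> t ^ s"
proof (cases "1 \<le> s")
  case True
  have "integral {a..t} (\<lambda>v. v ^ s / v) \<le> integral {a..t} (\<lambda>v. t ^ (s - 1))"
  proof (rule integral_le)
    show "(\<lambda>v. v ^ s / v) integrable_on {a..t}"
      by (rule integrable_continuous_interval) (use a_pos in \<open>auto intro!: continuous_intros\<close>)
    fix v assume v: "v \<in> {a..t}"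
    then have "v ^ s / v = v ^ (s - 1)" using True a_pos by (simp add: power_eq_if)
    also have "\<dots> \<le> t ^ (s - 1)" using v a_pos by (intro power_mono) auto
    finally show "v ^ s / v \<le> t ^ (s - 1)" .
  qed (rule integrable_const_ivl)
  also have "\<dots> = (t - a) * t ^ (s - 1)" using a_le_t by simp
  also have "\<dots> \<le> t * t ^ (s - 1)" using a_pos a_le_t by (intro mult_right_mono) auto
  also have "\<dots> = t ^ s" using True by (simp add: power_eq_if)
  finally show ?thesis .
next
  case False
  then have s: "s = 0" by simp
  have "integral {a..t} (\<lambda>v. v ^ s / v) \<le> integral {a..t} (\<lambda>v. 1 / a)"
  proof (rule integral_le)
    show "(\<lambda>v. v ^ s / v) integrable_on {a..t}"
      by (rule integrable_continuous_interval) (use a_pos in \<open>auto intro!: continuous_intros\<close>)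
  qed (use s a_pos in \<open>auto simp: frac_le\<close>)
  also have "\<dots> = (t - a) / a" using a_le_t by simp
  also have "\<dots> \<le> 1" using s_or_t False a_pos by (simp add: divide_le_eq)
  finally show ?thesis using s by simp
qed

text \<open>A Hardy-type inequality: integrating by parts against \<open>H u = \<integral>\<^sub>a\<^sup>u v\<^sup>s / v dv \<le> u\<^sup>s\<close>
  moves the weight from the tail integral onto \<open>g\<close>.\<close>
lemma integral_tail_integral_le:
  fixes g :: "real \<Rightarrow> real" and a \<beta> c :: real and s :: nat
  assumes a_pos: "0 < a" and a_le: "a \<le> \<beta>" and \<beta>_le: "\<beta> \<le> c"
    and g_cont: "continuous_on {a..c} g" and g_nonneg: "\<And>t. t \<in> {a..c} \<Longrightarrow> 0 \<le> g t"
    and s_or_\<beta>: "1 \<le> s \<or> \<beta> \<le> 2 * a"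
  shows "integral {a..\<beta>} (\<lambda>u. u ^ s / u * integral {u..c} g)
           \<le> \<beta> ^ s * integral {\<beta>..c} g + integral {a..\<beta>} (\<lambda>t. t ^ s * g t)"
proof -
  define h where "h = (\<lambda>v::real. v ^ s / v)"
  define H where "H = (\<lambda>u. integral {a..u} h)"
  define G where "G = (\<lambda>u. integral {u..c} g)"
  have h_cont: "continuous_on {a..\<beta>} h"
    unfolding h_def by (intro continuous_intros) (use a_pos in auto)
  have H_cont: "continuous_on {a..\<beta>} H"
    unfolding H_def by (rule indefinite_integral_continuous_1 integrable_continuous_interval h_cont)+
  have g_int: "g integrable_on {a..c}" using g_cont integrable_continuous_interval by blast
  have G_cont: "continuous_on {a..\<beta>} G"
    unfolding G_def using \<beta>_le
    by (intro continuous_on_subset[OF indefinite_integral_continuous_1'[OF g_int]]) auto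
  have H_deriv: "(H has_vector_derivative h u) (at u)" if "u \<in> {a<..<\<beta>}" for u
  proof -
    have "(H has_vector_derivative h u) (at u within {a..\<beta>})"
      unfolding H_def by (rule integral_has_vector_derivative[OF h_cont]) (use that in auto)
    moreover have "at u within {a..\<beta>} = at u" using that by (intro at_within_Icc_at) auto
    ultimately show ?thesis by simp
  qed
  have G_deriv: "(G has_vector_derivative - g u) (at u)" if "u \<in> {a<..<\<beta>}" for u
  proof -
    have "(G has_vector_derivative - g u) (at u within {a..c})"
      unfolding G_def by (rule integral_has_vector_derivative'[OF g_cont]) (use that \<beta>_le in auto)
    moreover have "at u within {a..c} = at u" using that \<beta>_le by (intro at_within_Icc_at) auto
    ultimately show ?thesis by simp
  qed
  have g_cont': "continuous_on {a..\<beta>} g" by (rule continuous_on_subset[OF g_cont]) (use \<beta>_le in auto)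
  have Hg_int: "(\<lambda>t. H t * g t) integrable_on {a..\<beta>}"
    by (rule integrable_continuous_interval) (intro continuous_intros H_cont g_cont')
  define y where "y = H \<beta> * G \<beta> + integral {a..\<beta>} (\<lambda>t. H t * g t)"
  have "((\<lambda>u. H u * - g u) has_integral (H \<beta> * G \<beta> - H a * G a - y)) {a..\<beta>}"
    using has_integral_neg[OF integrable_integral[OF Hg_int]] by (simp add: y_def H_def)
  from integration_by_parts_interior[OF bounded_bilinear_mult a_le H_cont G_cont H_deriv G_deriv this]
  have "((\<lambda>u. h u * G u) has_integral y) {a..\<beta>}" .
  then have by_parts: "integral {a..\<beta>} (\<lambda>u. u ^ s / u * integral {u..c} g) = y"
    unfolding h_def G_def by (rule integral_unique)
  have H_le: "H t \<le> t ^ s" if "t \<in> {a..\<beta>}" for t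
    unfolding H_def h_def using that s_or_\<beta> a_pos by (intro integral_power_div_le) auto
  have G_nonneg: "0 \<le> G \<beta>"
    unfolding G_def using g_int a_le \<beta>_le g_nonneg
    by (intro integral_nonneg) (auto intro: integrable_on_subinterval)
  have "H \<beta> * G \<beta> \<le> \<beta> ^ s * G \<beta>"
    using H_le[of \<beta>] a_le G_nonneg by (intro mult_right_mono) auto
  moreover have "integral {a..\<beta>} (\<lambda>t. H t * g t) \<le> integral {a..\<beta>} (\<lambda>t. t ^ s * g t)"
  proof (rule integral_le[OF Hg_int])
    show "(\<lambda>t. t ^ s * g t) integrable_on {a..\<beta>}"
      by (rule integrable_continuous_interval) (intro continuous_intros g_cont')
  qed (use H_le g_nonneg \<beta>_le in \<open>auto intro: mult_right_mono\<close>)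
  ultimately show ?thesis unfolding by_parts y_def G_def by linarith
qed

lemma integral_le_sum_cover:
  fixes f :: "real \<Rightarrow> real" and lo hi :: "'i \<Rightarrow> real"
  assumes fin: "finite I" and f_cont: "continuous_on {\<alpha>..\<beta>} f"
    and f_nonneg: "\<And>t. t \<in> {\<alpha>..\<beta>} \<Longrightarrow> 0 \<le> f t"
    and sub: "\<And>i. i \<in> I \<Longrightarrow> \<alpha> \<le> lo i \<and> hi i \<le> \<beta>"
    and cover: "\<And>t. t \<in> {\<alpha>..\<beta>} \<Longrightarrow> \<exists>i\<in>I. t \<in> {lo i..hi i}"
  shows "integral {\<alpha>..\<beta>} f \<le> (\<Sum>i\<in>I. integral {lo i..hi i} f)"
proof -
  have f_int: "f integrable_on {\<alpha>..\<beta>}" using f_cont integrable_continuous_interval by blast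
  define f' where "f' = (\<lambda>i t. if t \<in> {lo i..hi i} then f t else 0)"
  have restrict: "{lo i..hi i} \<inter> {\<alpha>..\<beta>} = {lo i..hi i}" if "i \<in> I" for i
    using sub[OF that] by auto
  have f'_int: "f' i integrable_on {\<alpha>..\<beta>}" if "i \<in> I" for i
  proof -
    have "f integrable_on {lo i..hi i}"
      by (rule integrable_on_subinterval[OF f_int]) (use sub[OF that] in auto)
    then show ?thesis unfolding f'_def using integrable_restrict_Int restrict[OF that] by metis
  qed
  have f'_integral: "integral {\<alpha>..\<beta>} (f' i) = integral {lo i..hi i} f" if "i \<in> I" for i
    unfolding f'_def integral_restrict_Int restrict[OF that] ..
  have "integral {\<alpha>..\<beta>} f \<le> integral {\<alpha>..\<beta>} (\<lambda>t. \<Sum>i\<in>I. f' i t)"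
  proof (rule integral_le[OF f_int])
    show "(\<lambda>t. \<Sum>i\<in>I. f' i t) integrable_on {\<alpha>..\<beta>}"
      by (rule integrable_sum) (use f'_int fin in auto)
    fix t assume t: "t \<in> {\<alpha>..\<beta>}"
    then obtain i where i: "i \<in> I" "t \<in> {lo i..hi i}" using cover by blast
    have "f t = f' i t" using i unfolding f'_def by simp
    also have "\<dots> \<le> (\<Sum>i\<in>I. f' i t)"
      by (rule member_le_sum) (use i fin f_nonneg t in \<open>auto simp: f'_def\<close>)
    finally show "f t \<le> (\<Sum>i\<in>I. f' i t)" .
  qed
  also have "\<dots> = (\<Sum>i\<in>I. integral {\<alpha>..\<beta>} (f' i))"
    by (rule integral_sum) (use f'_int fin in auto)
  also have "\<dots> = (\<Sum>i\<in>I. integral {lo i..hi i} f)"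
    using f'_integral by (rule sum.cong[OF refl])
  finally show ?thesis .
qed

lemma prod_subset_scaled_le:
  fixes f g :: "'i \<Rightarrow> real"
  assumes "finite A" "B \<subseteq> A" "0 < b" "\<And>i. i \<in> A \<Longrightarrow> b \<le> f i"
    and "\<And>i. i \<in> B \<Longrightarrow> 0 \<le> g i \<and> g i \<le> c * f i"
  shows "prod g B * b ^ (card A - card B) \<le> c ^ card B * prod f A"
proof -
  have "finite B" using assms(1,2) finite_subset by blast
  have "b ^ (card A - card B) \<le> prod f (A - B)"
  proof -
    have "prod (\<lambda>_. b) (A - B) \<le> prod f (A - B)"
      by (rule prod_mono) (use assms(3,4) in auto)
    then show ?thesis using card_Diff_subset[OF \<open>finite B\<close> assms(2)] by simp
  qed
  moreover have "prod g B \<le> c ^ card B * prod f B"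
  proof -
    have "prod g B \<le> prod (\<lambda>i. c * f i) B"
      by (rule prod_mono) (use assms(5) in auto)
    then show ?thesis by (simp add: prod.distrib)
  qed
  moreover have "0 \<le> prod g B" by (rule prod_nonneg) (use assms(5) in auto)
  ultimately have "prod g B * b ^ (card A - card B) \<le> (c ^ card B * prod f B) * prod f (A - B)"
    using assms(3) by (intro mult_mono) auto
  also have "\<dots> = c ^ card B * prod f A"
    by (simp add: prod.subset_diff[OF assms(2,1)] ac_simps)
  finally show ?thesis .
qed

lemma min_power_mult_le:
  fixes D E C \<mu> \<rho> b t :: real
  assumes "0 \<le> \<mu>" "\<mu> \<le> b" "0 \<le> \<rho>" "\<mu> * \<rho> \<le> 2 * t" "0 \<le> D" "0 \<le> C" "0 \<le> E"
    and "D * b ^ u \<le> C * \<rho> ^ w * E"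
  shows "D * \<mu> ^ (u + w) \<le> C * (2 * t) ^ w * E"
proof -
  have "D * \<mu> ^ (u + w) = (D * \<mu> ^ u) * \<mu> ^ w" by (simp add: power_add)
  also have "\<dots> \<le> (D * b ^ u) * \<mu> ^ w"
    using assms by (intro mult_right_mono mult_left_mono power_mono) auto
  also have "\<dots> \<le> (C * \<rho> ^ w * E) * \<mu> ^ w"
    using assms by (intro mult_right_mono) auto
  also have "\<dots> = C * (\<mu> * \<rho>) ^ w * E" by (simp add: power_mult_distrib)
  also have "\<dots> \<le> C * (2 * t) ^ w * E"
    using assms by (intro mult_right_mono mult_left_mono power_mono) auto
  finally show ?thesis .
qed

lemma growth_factor:
  fixes b t :: real
  assumes "0 < b" "0 < t"
  shows "0 \<le> (b + t) / b" and "b \<le> F \<Longrightarrow> F + t \<le> (b + t) / b * F"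
    and "min t b * ((b + t) / b) \<le> 2 * t"
proof -
  show "0 \<le> (b + t) / b" using assms by simp
  show "F + t \<le> (b + t) / b * F" if "b \<le> F"
  proof -
    have "t * b \<le> t * F" using that assms by simp
    then show ?thesis using assms by (simp add: field_simps)
  qed
  show "min t b * ((b + t) / b) \<le> 2 * t" using assms by (auto simp: min_def field_simps)
qed

lemma inPhi_nonneg: "inPhi \<phi> \<Longrightarrow> 0 \<le> t \<Longrightarrow> 0 \<le> \<phi> t"
  unfolding inPhi_def by (metis atLeast_iff mono_onD order_refl)

lemma inPhi_continuous_on: "inPhi \<phi> \<Longrightarrow> S \<subseteq> {0..} \<Longrightarrow> continuous_on S \<phi>"
  unfolding inPhi_def using continuous_on_subset by blast

lemma yext_Suc: "q < n \<Longrightarrow> yext y n (int q + 1) = y (Suc q)"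
  by (simp add: yext_def nat_add_distrib)

lemma yext_after_last: "yext y n (int n + 1) = y n + (y n - y 0)"
  by (simp add: yext_def)

lemma yext_pred: "0 < p \<Longrightarrow> p \<le> n \<Longrightarrow> yext y n (int p - 1) = y (p - 1)"
  by (simp add: yext_def nat_diff_distrib)

lemma yext_before_first: "yext y n (- 1) = y 0 - (y n - y 0)"
  by (simp add: yext_def)

lemma dpq_0_n: "dpq y n 0 n = 2 * (y n - y 0)"
  by (simp add: dpq_def yext_def)

definition Lambda_denom :: "(nat \<Rightarrow> real) \<Rightarrow> nat \<Rightarrow> nat \<Rightarrow> nat \<Rightarrow> real" where
  "Lambda_denom y n p q = (\<Prod>i<p. y q - y i) * (\<Prod>i\<in>{q+1..n}. y i - y p)"

lemma Lambda_pqr_eq: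
  assumes "p + r + 1 \<le> q"
  shows "Lambda_pqr y n p q r \<phi> =
    integral {y q - y p..dpq y n p q} (\<lambda>u. \<phi> u / u ^ (q - p - r + 1)) / Lambda_denom y n p q"
proof -
  have exponent: "int p + int r - int q - 1 = - int (q - p - r + 1)" using assms by simp
  have "u powi (int p + int r - int q - 1) * \<phi> u = \<phi> u / u ^ (q - p - r + 1)" for u :: real
    unfolding exponent power_int_minus power_int_of_nat by (simp add: divide_inverse mult.commute)
  then show ?thesis unfolding Lambda_pqr_def Lambda_denom_def by simp
qed

lemma finite_Qset: "finite (Qset n r)"
  by (rule finite_subset[of _ "{..n} \<times> {..n}"]) (auto simp: Qset_def)

lemma Lambda_pqr_le_Lambda:
  "(p, q) \<in> Qset n r \<Longrightarrow> Lambda_pqr y n p q r \<phi> \<le> Lambda r y n \<phi>"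
  unfolding Lambda_def by (rule Max_ge) (use finite_Qset in \<open>auto intro!: image_eqI[where x = "(p, q)"]\<close>)

lemma Lambda_le:
  assumes "r + 1 \<le> n" and "\<And>p q. (p, q) \<in> Qset n r \<Longrightarrow> Lambda_pqr y n p q r \<phi> \<le> C"
  shows "Lambda r y n \<phi> \<le> C"
  unfolding Lambda_def
proof (rule Max.boundedI)
  have "(0, r + 1) \<in> Qset n r" using assms(1) by (simp add: Qset_def)
  then show "(\<lambda>(p, q). Lambda_pqr y n p q r \<phi>) ` Qset n r \<noteq> {}" by blast
qed (use finite_Qset assms(2) in auto)

lemma Lambda_cong:
  assumes "\<And>i. i \<le> n \<Longrightarrow> y i = y' i"
  shows "Lambda r y n \<phi> = Lambda r y' n \<phi>"
proof -
  have yext: "yext y n = yext y' n" using assms by (auto simp: yext_def nat_le_iff)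
  have "Lambda_pqr y n p q r \<phi> = Lambda_pqr y' n p q r \<phi>" if "(p, q) \<in> Qset n r" for p q
  proof -
    have pq: "p \<le> n" "q \<le> n" using that by (auto simp: Qset_def)
    have "(\<Prod>i<p. y q - y i) = (\<Prod>i<p. y' q - y' i)"
      by (rule prod.cong) (use assms pq in auto)
    moreover have "(\<Prod>i\<in>{q+1..n}. y i - y p) = (\<Prod>i\<in>{q+1..n}. y' i - y' p)"
      by (rule prod.cong) (use assms pq in auto)
    ultimately show ?thesis unfolding Lambda_pqr_def dpq_def yext using assms pq by simp
  qed
  then show ?thesis unfolding Lambda_def by (auto intro!: arg_cong[where f = Max] image_cong)
qed

lemma Lambda_pqr_reflect:
  fixes y :: "nat \<Rightarrow> real"
  assumes "(p, q) \<in> Qset n r"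
  shows "Lambda_pqr y n p q r \<phi> = Lambda_pqr (\<lambda>i. - y (n - i)) n (n - q) (n - p) r \<phi>"
proof -
  define y' where "y' = (\<lambda>i. - y (n - i))"
  have pq: "p + r + 1 \<le> q" "q \<le> n" using assms by (auto simp: Qset_def)
  have upper: "yext y' n (int (n - p) + 1) = - yext y n (int p - 1)"
  proof (cases "p = 0")
    case False
    have "yext y' n (int (n - p) + 1) = y' (Suc (n - p))" using False pq by (intro yext_Suc) auto
    moreover have "yext y n (int p - 1) = y (p - 1)" using False pq by (intro yext_pred) auto
    moreover have "n - Suc (n - p) = p - 1" using False pq by simp
    ultimately show ?thesis unfolding y'_def by simp
  qed (simp add: yext_def y'_def)
  have lower: "yext y' n (int (n - q) - 1) = - yext y n (int q + 1)"
  proof (cases "q = n")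
    case False
    have "yext y' n (int (n - q) - 1) = y' (n - q - 1)" using False pq by (intro yext_pred) auto
    moreover have "yext y n (int q + 1) = y (Suc q)" using False pq by (intro yext_Suc) auto
    moreover have "n - (n - q - 1) = Suc q" using False pq by simp
    ultimately show ?thesis unfolding y'_def by simp
  qed (simp add: yext_def y'_def)
  have span: "y' (n - p) - y' (n - q) = y q - y p" unfolding y'_def using pq by simp
  have dpq: "dpq y' n (n - q) (n - p) = dpq y n p q"
    unfolding dpq_def upper lower using pq by (simp add: y'_def min.commute)
  have exponent: "int (n - q) + int r - int (n - p) - 1 = int p + int r - int q - 1" using pq by simp
  have left: "(\<Prod>i<n - q. y' (n - p) - y' i) = (\<Prod>i\<in>{q+1..n}. y i - y p)"
    by (rule prod.reindex_bij_witness[of _ "\<lambda>i. n - i" "\<lambda>i. n - i"]) (use pq in \<open>auto simp: y'_def\<close>)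
  have right: "(\<Prod>i\<in>{n - p + 1..n}. y' i - y' (n - q)) = (\<Prod>i<p. y q - y i)"
    by (rule prod.reindex_bij_witness[of _ "\<lambda>i. n - i" "\<lambda>i. n - i"]) (use pq in \<open>auto simp: y'_def\<close>)
  show ?thesis
    unfolding Lambda_pqr_def y'_def[symmetric] span dpq exponent left right by (simp add: mult.commute)
qed

lemma Lambda_reflect:
  fixes y :: "nat \<Rightarrow> real"
  shows "Lambda r y n \<phi> = Lambda r (\<lambda>i. - y (n - i)) n \<phi>"
proof -
  define \<sigma> where "\<sigma> = (\<lambda>(p::nat, q::nat). (n - q, n - p))"
  have "\<sigma> ` Qset n r = Qset n r"
  proof
    show "\<sigma> ` Qset n r \<subseteq> Qset n r" unfolding \<sigma>_def Qset_def by auto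
    show "Qset n r \<subseteq> \<sigma> ` Qset n r"
    proof
      fix P assume P: "P \<in> Qset n r"
      then obtain p q where "P = (p, q)" "(n - q, n - p) \<in> Qset n r" "\<sigma> (n - q, n - p) = P"
        unfolding \<sigma>_def Qset_def by auto
      then show "P \<in> \<sigma> ` Qset n r" by (metis image_eqI)
    qed
  qed
  moreover have "(\<lambda>(p, q). Lambda_pqr y n p q r \<phi>) ` Qset n r
      = (\<lambda>(p, q). Lambda_pqr (\<lambda>i. - y (n - i)) n p q r \<phi>) ` (\<sigma> ` Qset n r)"
    unfolding image_image by (rule image_cong) (auto simp: \<sigma>_def Lambda_pqr_reflect)
  ultimately show ?thesis unfolding Lambda_def by simp
qed

lemma Lambda_tail_reflect:
  fixes y :: "nat \<Rightarrow> real"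
  shows "Lambda r (\<lambda>i. y (Suc i)) n \<phi> = Lambda r (\<lambda>i. - y (Suc n - i)) n \<phi>"
  by (subst Lambda_reflect) (rule Lambda_cong, simp add: Suc_diff_le)

context
  fixes \<phi> \<omega> :: "real \<Rightarrow> real" and a b L :: real and e s k :: nat
  assumes \<phi>: "inPhi \<phi>" and \<omega>: "inPhi \<omega>"
    and a_pos: "0 < a" and a_le_b: "a \<le> b" and b_le: "b \<le> 2 * L"
    and k_eq: "k = s + e" and e_pos: "1 \<le> e"
    and below_span: "\<And>t. 0 < t \<Longrightarrow> t \<le> L \<Longrightarrow>
      \<phi> t \<le> t ^ (k - 1) * integral {t..2 * L} (\<lambda>u. \<omega> u / u ^ k)"
    and above_span: "\<And>t. L \<le> t \<Longrightarrow> t \<le> 2 * L \<Longrightarrow> \<phi> t \<le> \<omega> t"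
begin

abbreviation truncated_weight :: "real \<Rightarrow> real" where
  "truncated_weight t \<equiv> min t b ^ s / t ^ k * \<omega> t"

private lemma weight_integrable: "a \<le> c \<Longrightarrow> truncated_weight integrable_on {c..d}"
  using a_pos
  by (intro integrable_continuous_interval continuous_intros inPhi_continuous_on[OF \<omega>]) auto

private lemma weight_nonneg: "0 < t \<Longrightarrow> 0 \<le> truncated_weight t"
  using inPhi_nonneg[OF \<omega>, of t] a_pos a_le_b by simp

private lemma weight_eq: "0 < t \<Longrightarrow> t \<le> b \<Longrightarrow> truncated_weight t = \<omega> t / t ^ e"
  unfolding k_eq power_add by (simp add: min_def)

private lemma weight_integral_le:
  "a \<le> c \<Longrightarrow> d \<le> 2 * L \<Longrightarrow>
    integral {c..d} truncated_weight \<le> integral {a..2 * L} truncated_weight"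
  by (rule integral_subset_le) (use weight_integrable weight_nonneg a_pos in auto)

private lemma weight_integral_nonneg: "a \<le> c \<Longrightarrow> 0 \<le> integral {c..d} truncated_weight"
  by (rule integral_nonneg) (use weight_integrable weight_nonneg a_pos in auto)

private lemma phi_integrable: "a \<le> c \<Longrightarrow> (\<lambda>u. \<phi> u / u ^ e) integrable_on {c..d}"
  using a_pos
  by (intro integrable_continuous_interval continuous_intros inPhi_continuous_on[OF \<phi>]) auto

private lemma phi_integral_le_hardy:
  assumes a_le: "a \<le> \<beta>" and \<beta>_le_L: "\<beta> \<le> L" and \<beta>_le_b: "\<beta> \<le> b" and s_or_\<beta>: "1 \<le> s \<or> \<beta> \<le> 2 * a"
  shows "integral {a..\<beta>} (\<lambda>u. \<phi> u / u ^ e) \<le> integral {a..2 * L} truncated_weight"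
proof -
  define g where "g = (\<lambda>u. \<omega> u / u ^ k)"
  have g_cont: "continuous_on {a..2 * L} g"
    unfolding g_def using a_pos by (intro continuous_intros inPhi_continuous_on[OF \<omega>]) auto
  have g_nonneg: "0 \<le> g t" if "t \<in> {a..2 * L}" for t
    unfolding g_def using that a_pos inPhi_nonneg[OF \<omega>, of t] by simp
  have G_cont: "continuous_on {a..2 * L} (\<lambda>u. integral {u..2 * L} g)"
    by (rule indefinite_integral_continuous_1' integrable_continuous_interval g_cont)+
  have "integral {a..\<beta>} (\<lambda>u. \<phi> u / u ^ e) \<le> integral {a..\<beta>} (\<lambda>u. u ^ s / u * integral {u..2 * L} g)"
  proof (rule integral_le[OF phi_integrable[OF order_refl]])
    show "(\<lambda>u. u ^ s / u * integral {u..2 * L} g) integrable_on {a..\<beta>}"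
      using a_pos \<beta>_le_L a_le_b b_le
      by (intro integrable_continuous_interval continuous_intros continuous_on_subset[OF G_cont]) auto
    fix u assume u: "u \<in> {a..\<beta>}"
    then have u_pos: "0 < u" using a_pos by simp
    have "u ^ (k - 1) * u = u ^ s * u ^ e"
      using power_minus_mult[of k u] e_pos by (simp add: k_eq power_add)
    then have power_eq: "u ^ (k - 1) = u ^ s * u ^ e / u" using u_pos by (simp add: eq_divide_eq)
    have "\<phi> u / u ^ e \<le> u ^ (k - 1) * integral {u..2 * L} g / u ^ e"
      using below_span[of u] u u_pos \<beta>_le_L by (intro divide_right_mono) (auto simp: g_def)
    also have "\<dots> = u ^ s / u * integral {u..2 * L} g"
      unfolding power_eq using u_pos by simp
    finally show "\<phi> u / u ^ e \<le> u ^ s / u * integral {u..2 * L} g" .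
  qed
  also have "\<dots> \<le> \<beta> ^ s * integral {\<beta>..2 * L} g + integral {a..\<beta>} (\<lambda>t. t ^ s * g t)"
    using a_pos a_le \<beta>_le_L \<beta>_le_b b_le g_cont g_nonneg s_or_\<beta>
    by (intro integral_tail_integral_le) auto
  also have "\<beta> ^ s * integral {\<beta>..2 * L} g \<le> integral {\<beta>..2 * L} truncated_weight"
  proof -
    have "\<beta> ^ s * integral {\<beta>..2 * L} g = integral {\<beta>..2 * L} (\<lambda>t. \<beta> ^ s * g t)" by simp
    also have "\<dots> \<le> integral {\<beta>..2 * L} truncated_weight"
    proof (rule integral_le[OF _ weight_integrable[OF a_le]])
      show "(\<lambda>t. \<beta> ^ s * g t) integrable_on {\<beta>..2 * L}"
        using a_le
        by (intro integrable_continuous_interval continuous_intros continuous_on_subset[OF g_cont]) auto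
      fix t assume t: "t \<in> {\<beta>..2 * L}"
      have "\<beta> ^ s \<le> min t b ^ s" using t a_pos a_le \<beta>_le_b by (intro power_mono) auto
      then have "\<beta> ^ s * g t \<le> min t b ^ s * g t"
        using g_nonneg[of t] t a_le by (intro mult_right_mono) auto
      then show "\<beta> ^ s * g t \<le> truncated_weight t" unfolding g_def by simp
    qed
    finally show ?thesis .
  qed
  also have "integral {a..\<beta>} (\<lambda>t. t ^ s * g t) = integral {a..\<beta>} truncated_weight"
    by (rule integral_cong) (use a_pos \<beta>_le_b in \<open>auto simp: g_def weight_eq k_eq power_add\<close>)
  also have "integral {\<beta>..2 * L} truncated_weight + integral {a..\<beta>} truncated_weight
      = integral {a..2 * L} truncated_weight"
    using Henstock_Kurzweil_Integration.integral_combine[of a \<beta> "2 * L" truncated_weight]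
      a_le \<beta>_le_b b_le weight_integrable[of a "2 * L"] by linarith
  finally show ?thesis by simp
qed

private lemma phi_integral_le_direct:
  assumes "a \<le> \<beta>" "L \<le> \<beta>"
  shows "integral {\<beta>..b} (\<lambda>u. \<phi> u / u ^ e) \<le> integral {a..2 * L} truncated_weight"
proof -
  have "integral {\<beta>..b} (\<lambda>u. \<phi> u / u ^ e) \<le> integral {\<beta>..b} truncated_weight"
  proof (rule integral_le[OF phi_integrable weight_integrable])
    fix u assume u: "u \<in> {\<beta>..b}"
    then have "0 < u" using assms a_pos by simp
    then have "\<phi> u / u ^ e \<le> \<omega> u / u ^ e"
      using above_span[of u] u assms b_le by (intro divide_right_mono) auto
    also have "\<dots> = truncated_weight u" using u \<open>0 < u\<close> by (intro weight_eq[symmetric]) auto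
    finally show "\<phi> u / u ^ e \<le> truncated_weight u" .
  qed (use assms in auto)
  also have "\<dots> \<le> integral {a..2 * L} truncated_weight"
    using assms b_le by (intro weight_integral_le) auto
  finally show ?thesis .
qed

lemma phi_integral_le:
  assumes "s = 0 \<Longrightarrow> b \<le> 2 * a"
  shows "integral {a..b} (\<lambda>u. \<phi> u / u ^ e) \<le> 2 * integral {a..2 * L} truncated_weight"
proof -
  define \<beta> where "\<beta> = (if L < a then a else min b L)"
  have \<beta>: "a \<le> \<beta>" "\<beta> \<le> b" using a_le_b by (auto simp: \<beta>_def)
  have "integral {a..b} (\<lambda>u. \<phi> u / u ^ e)
      = integral {a..\<beta>} (\<lambda>u. \<phi> u / u ^ e) + integral {\<beta>..b} (\<lambda>u. \<phi> u / u ^ e)"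
    using Henstock_Kurzweil_Integration.integral_combine[OF \<beta> phi_integrable[OF order_refl]] by simp
  moreover have "integral {a..\<beta>} (\<lambda>u. \<phi> u / u ^ e) \<le> integral {a..2 * L} truncated_weight"
  proof (cases "L < a")
    case True
    then show ?thesis using weight_integral_nonneg[OF order_refl] by (simp add: \<beta>_def)
  next
    case False
    moreover have "1 \<le> s \<or> b \<le> 2 * a" using assms by (cases s) auto
    ultimately show ?thesis using \<beta> by (intro phi_integral_le_hardy) (auto simp: \<beta>_def)
  qed
  moreover have "integral {\<beta>..b} (\<lambda>u. \<phi> u / u ^ e) \<le> integral {a..2 * L} truncated_weight"
  proof (cases "\<beta> = b")
    case True
    then show ?thesis using weight_integral_nonneg[OF order_refl] by simp
  next
    case False
    then have "L \<le> \<beta>" by (auto simp: \<beta>_def)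
    then show ?thesis using \<beta> by (intro phi_integral_le_direct)
  qed
  ultimately show ?thesis by linarith
qed

end

locale knots =
  fixes x :: "nat \<Rightarrow> real" and m r k :: nat
  assumes k_ge_2: "2 \<le> k" and m_eq: "m = r + k"
    and step_le: "\<And>i. i < m \<Longrightarrow> x i \<le> x (Suc i)"
    and gap_less: "\<And>j. j + r + 1 \<le> m \<Longrightarrow> x j < x (j + r + 1)"
begin

lemma knot_le:
  assumes "i \<le> j" "j \<le> m"
  shows "x i \<le> x j"
proof (rule lift_Suc_mono_le_ivl[OF _ assms(1)])
  show "{i..<j} \<subseteq> {..<m}" using assms(2) by auto
qed (simp add: step_le)

lemma span_pos: "0 < x m - x 0"
  using gap_less[of 0] knot_le[of "r + 1" m] k_ge_2 m_eq by simp

lemma Qset_less: "(p, q) \<in> Qset n r \<Longrightarrow> n \<le> m \<Longrightarrow> x p < x q"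
  using gap_less[of p] knot_le[of "p + r + 1" q] by (auto simp: Qset_def)

lemma yext_succ_ge: "q \<le> n \<Longrightarrow> n \<le> m \<Longrightarrow> x q \<le> yext x n (int q + 1)"
  using knot_le[of 0 n] knot_le[of q "Suc q"] by (cases "q < n") (auto simp: yext_Suc yext_after_last)

lemma yext_succ_le: "q < i \<Longrightarrow> i \<le> n \<Longrightarrow> n \<le> m \<Longrightarrow> yext x n (int q + 1) \<le> x i"
  using knot_le[of "Suc q" i] by (simp add: yext_Suc)

lemma yext_succ_le_span: "q \<le> n \<Longrightarrow> n \<le> m \<Longrightarrow> yext x n (int q + 1) \<le> x m + (x m - x 0)"
  using knot_le[of "Suc q" m] knot_le[of n m] knot_le[of 0 n] span_pos
  by (cases "q < n") (auto simp: yext_Suc yext_after_last)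

lemma yext_pred_le: "p \<le> n \<Longrightarrow> n \<le> m \<Longrightarrow> yext x n (int p - 1) \<le> x p"
  using knot_le[of 0 n] knot_le[of "p - 1" p] by (cases "p = 0") (auto simp: yext_pred yext_before_first)

lemma yext_pred_ge: "i < p \<Longrightarrow> p \<le> n \<Longrightarrow> n \<le> m \<Longrightarrow> x i \<le> yext x n (int p - 1)"
  using knot_le[of i "p - 1"] by (simp add: yext_pred)

context
  fixes n p q :: nat
  assumes pq: "(p, q) \<in> Qset n r" and n_le: "n \<le> m"
begin

lemma dpq_ge: "x q - x p \<le> dpq x n p q"
  using pq n_le yext_succ_ge[of q n] yext_pred_le[of p n] by (auto simp: dpq_def Qset_def)

lemma dpq_le_span: "dpq x n p q \<le> 2 * (x m - x 0)"
  using pq n_le yext_succ_le_span[of q n] knot_le[of 0 p] by (auto simp: dpq_def Qset_def)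

lemma dpq_le_left: "i < p \<Longrightarrow> dpq x n p q \<le> x q - x i"
  using pq n_le yext_pred_ge[of i p n] by (auto simp: dpq_def Qset_def)

lemma dpq_le_right: "q < i \<Longrightarrow> i \<le> n \<Longrightarrow> dpq x n p q \<le> x i - x p"
  using n_le yext_succ_le[of q i n] by (auto simp: dpq_def)

lemma Lambda_denom_pos: "0 < Lambda_denom x n p q"
proof -
  have "x p < x q" using Qset_less pq n_le .
  moreover have "x i \<le> x p" if "i < p" for i using that pq n_le by (intro knot_le) (auto simp: Qset_def)
  moreover have "x q \<le> x i" if "i \<in> {q+1..n}" for i using that n_le by (intro knot_le) auto
  ultimately show ?thesis
    unfolding Lambda_denom_def by (intro mult_pos_pos prod_pos) force+
qed

lemma Lambda_pqr_nonneg: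
  assumes "inPhi \<omega>"
  shows "0 \<le> Lambda_pqr x n p q r \<omega>"
proof -
  have lo_pos: "0 < x q - x p" using Qset_less pq n_le by simp
  have "p + r + 1 \<le> q" using pq by (simp add: Qset_def)
  moreover have "0 \<le> integral {x q - x p..dpq x n p q} (\<lambda>u. \<omega> u / u ^ (q - p - r + 1))"
    using lo_pos inPhi_nonneg[OF assms]
    by (intro integral_nonneg integrable_continuous_interval continuous_intros
        inPhi_continuous_on[OF assms]) auto
  ultimately show ?thesis using Lambda_denom_pos by (simp add: Lambda_pqr_eq)
qed

end

lemma dpq_ge_if_not_extendable:
  assumes "pp \<le> qq" "qq \<le> m" "t \<le> 2 * (x m - x 0)"
    and up: "qq < m \<Longrightarrow> t < x (Suc qq) - x pp"
    and down: "0 < pp \<Longrightarrow> t < x qq - x (pp - 1)"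
  shows "t \<le> dpq x m pp qq"
proof -
  have "t \<le> yext x m (int qq + 1) - x pp"
  proof (cases "qq < m")
    case False
    then have "qq = m" using assms by simp
    moreover have "pp = 0 \<or> t < x m - x 0"
      using down \<open>qq = m\<close> knot_le[of 0 "pp - 1"] assms by fastforce
    ultimately show ?thesis using assms knot_le[of pp m] by (auto simp: yext_after_last)
  qed (use up in \<open>simp add: yext_Suc\<close>)
  moreover have "t \<le> x qq - yext x m (int pp - 1)"
  proof (cases "0 < pp")
    case False
    moreover have "qq = m \<or> t < x m - x 0"
      using False up knot_le[of "Suc qq" m] assms by fastforce
    ultimately show ?thesis
      using assms knot_le[of 0 qq] yext_before_first[of x m] by auto
  qed (use down assms in \<open>simp add: yext_pred\<close>)
  ultimately show ?thesis by (simp add: dpq_def)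
qed

text \<open>The covering pair is one with \<open>x\<^sub>q\<^sub>q - x\<^sub>p\<^sub>p \<le> t\<close> and \<open>qq - pp\<close> maximal.\<close>
lemma short_pair_cover:
  assumes "(p, q) \<in> Qset (m - 1) r" "x q - x p \<le> t" "t \<le> 2 * (x m - x 0)"
  obtains pp qq where "pp \<le> p" "q \<le> qq" "qq \<le> m" "x qq - x pp \<le> t" "t \<le> dpq x m pp qq"
proof -
  define admissible where "admissible = (\<lambda>(i, j). i \<le> p \<and> q \<le> j \<and> j \<le> m \<and> x j - x i \<le> t)"
  have "admissible (p, q)" "q \<le> m" using assms by (auto simp: admissible_def Qset_def)
  then have "\<exists>P. admissible P \<and> (\<forall>P'. admissible P' \<longrightarrow> (\<lambda>(i, j). j - i) P' \<le> (\<lambda>(i, j). j - i) P)"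
    by (intro ex_has_greatest_nat[of admissible "(p, q)" _ "m + 1"]) (auto simp: admissible_def)
  then obtain P where P: "admissible P"
    and P_max: "\<And>P'. admissible P' \<Longrightarrow> (\<lambda>(i, j). j - i) P' \<le> (\<lambda>(i, j). j - i) P"
    by blast
  obtain pp qq where P_eq: "P = (pp, qq)" by force
  have PQ: "pp \<le> p" "q \<le> qq" "qq \<le> m" "x qq - x pp \<le> t"
    using P by (auto simp: admissible_def P_eq)
  have "pp \<le> qq" using PQ assms(1) by (auto simp: Qset_def)
  have "t \<le> dpq x m pp qq"
  proof (rule dpq_ge_if_not_extendable)
    show "t < x (Suc qq) - x pp" if "qq < m"
      using P_max[of "(pp, Suc qq)"] PQ that \<open>pp \<le> qq\<close> by (force simp: admissible_def P_eq)
    show "t < x qq - x (pp - 1)" if "0 < pp"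
      using P_max[of "(pp - 1, qq)"] PQ that \<open>pp \<le> qq\<close> by (force simp: admissible_def P_eq)
  qed (use PQ \<open>pp \<le> qq\<close> assms in auto)
  with PQ that show ?thesis by blast
qed

lemma left_denom_le:
  assumes "pp \<le> p" "p \<le> q" "q \<le> qq" "qq \<le> m" "x qq - x pp \<le> t" "0 < b"
    and b_le: "\<And>i. i < p \<Longrightarrow> b \<le> x q - x i" and \<rho>: "\<And>F. b \<le> F \<Longrightarrow> F + t \<le> \<rho> * F"
  shows "(\<Prod>i<pp. x qq - x i) * b ^ (p - pp) \<le> \<rho> ^ pp * (\<Prod>i<p. x q - x i)"
proof -
  have "(\<Prod>i<pp. x qq - x i) * b ^ (card {..<p} - card {..<pp}) \<le> \<rho> ^ card {..<pp} * (\<Prod>i<p. x q - x i)"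
  proof (rule prod_subset_scaled_le)
    fix i assume "i \<in> {..<pp}"
    then have "x i \<le> x pp" "x pp \<le> x q" "x q \<le> x qq" "i < p" using assms by (auto intro!: knot_le)
    then show "0 \<le> x qq - x i \<and> x qq - x i \<le> \<rho> * (x q - x i)"
      using \<rho>[OF b_le[of i]] assms(5) by (intro conjI; linarith)
  qed (use assms in auto)
  then show ?thesis by simp
qed

lemma right_denom_le:
  assumes "pp \<le> p" "p \<le> q" "q \<le> qq" "qq < m" "x qq - x pp \<le> t" "0 < b" "0 \<le> \<rho>"
    and b_le: "\<And>i. q < i \<Longrightarrow> i < m \<Longrightarrow> b \<le> x i - x p" and \<rho>: "\<And>F. b \<le> F \<Longrightarrow> F + t \<le> \<rho> * F"
  shows "(\<Prod>i\<in>{qq+1..m}. x i - x pp) * b ^ (qq - q)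
    \<le> (x m - x 0) * (\<rho> ^ (m - 1 - qq) * (\<Prod>i\<in>{q+1..m-1}. x i - x p))"
proof -
  have "{qq+1..m} = insert m {qq+1..m-1}" using assms by auto
  then have split: "(\<Prod>i\<in>{qq+1..m}. x i - x pp) = (x m - x pp) * (\<Prod>i\<in>{qq+1..m-1}. x i - x pp)"
    using assms by simp
  have "(\<Prod>i\<in>{qq+1..m-1}. x i - x pp) * b ^ (card {q+1..m-1} - card {qq+1..m-1})
      \<le> \<rho> ^ card {qq+1..m-1} * (\<Prod>i\<in>{q+1..m-1}. x i - x p)"
  proof (rule prod_subset_scaled_le)
    fix i assume "i \<in> {qq+1..m-1}"
    then have "x pp \<le> x p" "x p \<le> x qq" "x qq \<le> x i" "q < i" "i < m"
      using assms by (auto intro!: knot_le)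
    then show "0 \<le> x i - x pp \<and> x i - x pp \<le> \<rho> * (x i - x p)"
      using \<rho>[OF b_le[of i]] assms(5) by (intro conjI; linarith)
  qed (use assms b_le in auto)
  moreover have "card {q+1..m-1} - card {qq+1..m-1} = qq - q" using assms by simp
  ultimately have inner: "(\<Prod>i\<in>{qq+1..m-1}. x i - x pp) * b ^ (qq - q)
      \<le> \<rho> ^ (m - 1 - qq) * (\<Prod>i\<in>{q+1..m-1}. x i - x p)" by simp
  have "0 \<le> (\<Prod>i\<in>{qq+1..m-1}. x i - x pp)" "x m - x pp \<le> x m - x 0" "0 \<le> x m - x pp"
    using assms by (auto intro!: prod_nonneg knot_le simp: algebra_simps)
  then show ?thesis
    unfolding split mult.assoc using assms(6) by (intro mult_mono inner) auto
qed

lemma Lambda_denom_ratio_le: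
  assumes pq: "(p, q) \<in> Qset (m - 1) r" and P: "pp \<le> p" "q \<le> qq" "qq \<le> m" and t: "x qq - x pp \<le> t"
    and b: "0 < b" "\<And>i. i < p \<Longrightarrow> b \<le> x q - x i" "\<And>i. q < i \<Longrightarrow> i < m \<Longrightarrow> b \<le> x i - x p"
    and \<rho>: "0 \<le> \<rho>" "\<And>F. b \<le> F \<Longrightarrow> F + t \<le> \<rho> * F"
  shows "qq < m \<Longrightarrow> Lambda_denom x m pp qq * b ^ ((p - pp) + (qq - q))
      \<le> (x m - x 0) * \<rho> ^ (pp + (m - 1 - qq)) * Lambda_denom x (m - 1) p q"
    and "qq = m \<Longrightarrow> Lambda_denom x m pp qq * b ^ ((p - pp) + (m - 1 - q))
      \<le> 1 * \<rho> ^ pp * Lambda_denom x (m - 1) p q"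
proof -
  have "p \<le> q" "q < m" using pq k_ge_2 m_eq by (auto simp: Qset_def)
  have left: "(\<Prod>i<pp. x qq - x i) * b ^ (p - pp) \<le> \<rho> ^ pp * (\<Prod>i<p. x q - x i)"
    using P t b \<rho> \<open>p \<le> q\<close> by (intro left_denom_le) auto
  have nonneg: "0 \<le> (\<Prod>i<pp. x qq - x i)" "0 \<le> (\<Prod>i\<in>{qq+1..m}. x i - x pp)"
      "0 \<le> (\<Prod>i<p. x q - x i)" "0 \<le> (\<Prod>i\<in>{q+1..m-1}. x i - x p)"
    using P \<open>p \<le> q\<close> by (auto intro!: prod_nonneg knot_le)
  show "Lambda_denom x m pp qq * b ^ ((p - pp) + (qq - q))
      \<le> (x m - x 0) * \<rho> ^ (pp + (m - 1 - qq)) * Lambda_denom x (m - 1) p q" if "qq < m"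
  proof -
    have right: "(\<Prod>i\<in>{qq+1..m}. x i - x pp) * b ^ (qq - q)
        \<le> (x m - x 0) * (\<rho> ^ (m - 1 - qq) * (\<Prod>i\<in>{q+1..m-1}. x i - x p))"
      using P t b \<rho> \<open>p \<le> q\<close> that by (intro right_denom_le) auto
    have "Lambda_denom x m pp qq * b ^ ((p - pp) + (qq - q))
        = ((\<Prod>i<pp. x qq - x i) * b ^ (p - pp)) * ((\<Prod>i\<in>{qq+1..m}. x i - x pp) * b ^ (qq - q))"
      by (simp add: Lambda_denom_def power_add ac_simps)
    also have "\<dots> \<le> (\<rho> ^ pp * (\<Prod>i<p. x q - x i))
        * ((x m - x 0) * (\<rho> ^ (m - 1 - qq) * (\<Prod>i\<in>{q+1..m-1}. x i - x p)))"
      by (rule mult_mono[OF left right]) (use nonneg b(1) \<rho>(1) in auto)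
    also have "\<dots> = (x m - x 0) * \<rho> ^ (pp + (m - 1 - qq)) * Lambda_denom x (m - 1) p q"
      by (simp add: Lambda_denom_def power_add ac_simps)
    finally show ?thesis .
  qed
  show "Lambda_denom x m pp qq * b ^ ((p - pp) + (m - 1 - q))
      \<le> 1 * \<rho> ^ pp * Lambda_denom x (m - 1) p q"
    if "qq = m"
  proof -
    have "b ^ (m - 1 - q) = (\<Prod>i\<in>{q+1..m-1}. b)" by simp
    also have "\<dots> \<le> (\<Prod>i\<in>{q+1..m-1}. x i - x p)"
      using b by (intro prod_mono) auto
    finally have right: "b ^ (m - 1 - q) \<le> (\<Prod>i\<in>{q+1..m-1}. x i - x p)" .
    have "Lambda_denom x m pp qq * b ^ ((p - pp) + (m - 1 - q))
        = ((\<Prod>i<pp. x qq - x i) * b ^ (p - pp)) * b ^ (m - 1 - q)"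
      using that by (simp add: Lambda_denom_def power_add)
    also have "\<dots> \<le> (\<rho> ^ pp * (\<Prod>i<p. x q - x i)) * (\<Prod>i\<in>{q+1..m-1}. x i - x p)"
      by (rule mult_mono[OF left right]) (use nonneg b(1) \<rho>(1) in auto)
    finally show ?thesis by (simp add: Lambda_denom_def ac_simps)
  qed
qed

lemma truncated_weight_factor_le:
  assumes pq: "(p, q) \<in> Qset (m - 1) r" and P: "pp \<le> p" "q \<le> qq" "qq \<le> m"
    and t: "x qq - x pp \<le> t" "t \<le> 2 * (x m - x 0)"
  shows "Lambda_denom x m pp qq * min t (dpq x (m - 1) p q) ^ (k - (q - p - r + 1))
      * t ^ (qq - pp - r + 1)
    \<le> 2 ^ (k + 1) * (x m - x 0) * Lambda_denom x (m - 1) p q * t ^ k"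
proof -
  define b where "b = dpq x (m - 1) p q"
  define \<rho> where "\<rho> = (b + t) / b"
  have pq': "p + r + 1 \<le> q" "q < m" using pq k_ge_2 m_eq by (auto simp: Qset_def)
  have "0 < x q - x p" using Qset_less[OF pq] by simp
  then have b_pos: "0 < b" using dpq_ge[OF pq] by (simp add: b_def)
  have t_pos: "0 < t" using t knot_le[of pp p] knot_le[of q qq] P pq' \<open>0 < x q - x p\<close> by linarith
  note \<rho> = growth_factor[OF b_pos t_pos, folded \<rho>_def]
  have Dn_nonneg: "0 \<le> Lambda_denom x m pp qq"
    using Lambda_denom_pos[of pp qq m] P pq' by (simp add: Qset_def)
  have Do_nonneg: "0 \<le> Lambda_denom x (m - 1) p q" using Lambda_denom_pos[OF pq] by simp
  have b_left: "b \<le> x q - x i" if "i < p" for i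
    using dpq_le_left[OF pq _ that] by (simp add: b_def)
  have b_right: "b \<le> x i - x p" if "q < i" "i < m" for i
    using dpq_le_right[OF pq _ that(1)] that by (simp add: b_def)
  note ratio = Lambda_denom_ratio_le[OF pq P t(1) b_pos b_left b_right \<rho>(1,2)]
  show ?thesis
  proof (cases "qq < m")
    case True
    define w where "w = pp + (m - 1 - qq)"
    have exps: "k - (q - p - r + 1) = ((p - pp) + (qq - q)) + w" "(qq - pp - r + 1) + w = k"
      using P pq' True m_eq by (simp_all add: w_def)
    have "Lambda_denom x m pp qq * b ^ ((p - pp) + (qq - q))
        \<le> (x m - x 0) * \<rho> ^ w * Lambda_denom x (m - 1) p q"
      using ratio(1) True unfolding w_def by blast
    then have "Lambda_denom x m pp qq * min t b ^ (k - (q - p - r + 1))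
        \<le> (x m - x 0) * (2 * t) ^ w * Lambda_denom x (m - 1) p q"
      unfolding exps(1) using b_pos t_pos span_pos
      by (intro min_power_mult_le[OF _ _ \<rho>(1,3) Dn_nonneg _ Do_nonneg]) auto
    then have "Lambda_denom x m pp qq * min t b ^ (k - (q - p - r + 1)) * t ^ (qq - pp - r + 1)
        \<le> (x m - x 0) * 2 ^ w * Lambda_denom x (m - 1) p q * t ^ k"
      using t_pos
      by (auto simp: exps(2)[symmetric] power_add power_mult_distrib ac_simps intro: mult_right_mono)
    also have "\<dots> \<le> 2 ^ (k + 1) * (x m - x 0) * Lambda_denom x (m - 1) p q * t ^ k"
    proof -
      have "(2::real) ^ w \<le> 2 ^ (k + 1)"
        using P pq' True m_eq by (intro power_increasing) (auto simp: w_def)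
      from mult_right_mono[OF this, of "(x m - x 0) * Lambda_denom x (m - 1) p q * t ^ k"]
      show ?thesis using span_pos Do_nonneg t_pos by (simp add: ac_simps)
    qed
    finally show ?thesis by (simp add: b_def)
  next
    case False
    then have "qq = m" using P by simp
    have exps: "k - (q - p - r + 1) = ((p - pp) + (m - 1 - q)) + pp" "(qq - pp - r + 1) + pp = k + 1"
      using P pq' \<open>qq = m\<close> m_eq by simp_all
    have "Lambda_denom x m pp qq * b ^ ((p - pp) + (m - 1 - q))
        \<le> 1 * \<rho> ^ pp * Lambda_denom x (m - 1) p q"
      using ratio(2) \<open>qq = m\<close> by blast
    then have "Lambda_denom x m pp qq * min t b ^ (k - (q - p - r + 1))
        \<le> 1 * (2 * t) ^ pp * Lambda_denom x (m - 1) p q"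
      unfolding exps(1) using b_pos t_pos
      by (intro min_power_mult_le[OF _ _ \<rho>(1,3) Dn_nonneg _ Do_nonneg]) auto
    then have "Lambda_denom x m pp qq * min t b ^ (k - (q - p - r + 1)) * t ^ (qq - pp - r + 1)
        \<le> 2 ^ pp * Lambda_denom x (m - 1) p q * (t ^ (qq - pp - r + 1) * t ^ pp)"
      using t_pos by (auto simp: power_mult_distrib ac_simps intro: mult_right_mono)
    also have "\<dots> = 2 ^ pp * Lambda_denom x (m - 1) p q * t ^ k * t"
      by (simp only: power_add[symmetric] exps(2)) simp
    also have "\<dots> \<le> 2 ^ pp * Lambda_denom x (m - 1) p q * t ^ k * (2 * (x m - x 0))"
      using t Do_nonneg t_pos by (intro mult_left_mono) auto
    also have "\<dots> = 2 ^ (pp + 1) * ((x m - x 0) * Lambda_denom x (m - 1) p q * t ^ k)"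
      by (simp add: mult_ac)
    also have "\<dots> \<le> 2 ^ (k + 1) * ((x m - x 0) * Lambda_denom x (m - 1) p q * t ^ k)"
      using P pq' m_eq span_pos Do_nonneg t_pos by (intro mult_right_mono power_increasing) auto
    finally show ?thesis by (simp add: b_def mult_ac)
  qed
qed

lemma Lambda_nonneg:
  assumes "inPhi \<omega>"
  shows "0 \<le> Lambda r x m \<omega>"
proof -
  have PQ: "(0, r + 1) \<in> Qset m r" using k_ge_2 m_eq by (simp add: Qset_def)
  show ?thesis
    using Lambda_pqr_nonneg[OF PQ order_refl assms] Lambda_pqr_le_Lambda[OF PQ, of x \<omega>] by linarith
qed

lemma truncated_weight_integral_le_Lambda:
  assumes \<omega>: "inPhi \<omega>" and pq: "(p, q) \<in> Qset (m - 1) r" and P: "pp \<le> p" "q \<le> qq" "qq \<le> m"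
  shows "integral {x qq - x pp..dpq x m pp qq}
      (truncated_weight \<omega> (dpq x (m - 1) p q) (k - (q - p - r + 1)) k)
    \<le> 2 ^ (k + 1) * (x m - x 0) * Lambda_denom x (m - 1) p q * Lambda r x m \<omega>"
proof -
  define b where "b = dpq x (m - 1) p q"
  define s where "s = k - (q - p - r + 1)"
  define e where "e = qq - pp - r + 1"
  define X where "X = 2 ^ (k + 1) * (x m - x 0) * Lambda_denom x (m - 1) p q"
  define Dn where "Dn = Lambda_denom x m pp qq"
  have PQ: "(pp, qq) \<in> Qset m r" using P pq by (auto simp: Qset_def)
  have lo_pos: "0 < x qq - x pp" using Qset_less[OF PQ] by simp
  have Dn_pos: "0 < Dn" using Lambda_denom_pos[OF PQ] by (simp add: Dn_def)
  have pointwise: "truncated_weight \<omega> b s k t \<le> X / Dn * (\<omega> t / t ^ e)"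
    if t: "t \<in> {x qq - x pp..dpq x m pp qq}" for t
  proof -
    have t_pos: "0 < t" using t lo_pos by simp
    have "Dn * min t b ^ s * t ^ e \<le> X * t ^ k"
      using truncated_weight_factor_le[OF pq P] t dpq_le_span[OF PQ]
      by (simp add: Dn_def b_def s_def e_def X_def)
    then have "min t b ^ s \<le> X * t ^ k / (Dn * t ^ e)"
      using Dn_pos t_pos by (simp add: pos_le_divide_eq mult_ac)
    then have "truncated_weight \<omega> b s k t \<le> X * t ^ k / (Dn * t ^ e) / t ^ k * \<omega> t"
      using inPhi_nonneg[OF \<omega>] t_pos by (intro mult_right_mono divide_right_mono) auto
    also have "\<dots> = X / Dn * (\<omega> t / t ^ e)" using t_pos by simp
    finally show ?thesis .
  qed
  have "integral {x qq - x pp..dpq x m pp qq} (truncated_weight \<omega> b s k)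
      \<le> integral {x qq - x pp..dpq x m pp qq} (\<lambda>t. X / Dn * (\<omega> t / t ^ e))"
    using pointwise lo_pos
    by (intro integral_le integrable_continuous_interval continuous_intros
        inPhi_continuous_on[OF \<omega>]) auto
  also have "\<dots> = X / Dn * integral {x qq - x pp..dpq x m pp qq} (\<lambda>t. \<omega> t / t ^ e)"
    by (rule integral_mult_right)
  also have "\<dots> = X * Lambda_pqr x m pp qq r \<omega>"
    using PQ by (simp add: Lambda_pqr_eq Qset_def e_def Dn_def)
  also have "\<dots> \<le> X * Lambda r x m \<omega>"
    using Lambda_pqr_le_Lambda[OF PQ] Lambda_denom_pos[OF pq] span_pos
    by (intro mult_left_mono) (auto simp: X_def)
  finally show ?thesis by (simp add: b_def s_def X_def)
qed

lemma truncated_weight_integral_le: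
  assumes \<omega>: "inPhi \<omega>" and pq: "(p, q) \<in> Qset (m - 1) r"
  shows "integral {x q - x p..2 * (x m - x 0)}
      (truncated_weight \<omega> (dpq x (m - 1) p q) (k - (q - p - r + 1)) k)
    \<le> (real k + 1) ^ 2 * (2 ^ (k + 1) * (x m - x 0) * Lambda_denom x (m - 1) p q * Lambda r x m \<omega>)"
proof -
  define f where "f = truncated_weight \<omega> (dpq x (m - 1) p q) (k - (q - p - r + 1)) k"
  define X where "X = 2 ^ (k + 1) * (x m - x 0) * Lambda_denom x (m - 1) p q * Lambda r x m \<omega>"
  define S where "S = {..p} \<times> {q..m}"
  define lo where "lo = (\<lambda>(pp, qq). x qq - x pp)"
  define hi where "hi = (\<lambda>(pp, qq). dpq x m pp qq)"
  have pq': "p + r + 1 \<le> q" "q < m" using pq k_ge_2 m_eq by (auto simp: Qset_def)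
  have a_pos: "0 < x q - x p" using Qset_less[OF pq] by simp
  have "integral {x q - x p..2 * (x m - x 0)} f \<le> (\<Sum>P\<in>S. integral {lo P..hi P} f)"
  proof (rule integral_le_sum_cover)
    show "continuous_on {x q - x p..2 * (x m - x 0)} f"
      unfolding f_def using a_pos by (intro continuous_intros inPhi_continuous_on[OF \<omega>]) auto
    show "0 \<le> f t" if "t \<in> {x q - x p..2 * (x m - x 0)}" for t
      unfolding f_def using that a_pos dpq_ge[OF pq] inPhi_nonneg[OF \<omega>, of t]
      by (intro mult_nonneg_nonneg divide_nonneg_pos zero_le_power) auto
    show "x q - x p \<le> lo P \<and> hi P \<le> 2 * (x m - x 0)" if "P \<in> S" for P
    proof -
      obtain pp qq where "P = (pp, qq)" by force
      with that have P: "P = (pp, qq)" "pp \<le> p" "q \<le> qq" "qq \<le> m" by (auto simp: S_def)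
      then have "(pp, qq) \<in> Qset m r" using pq' by (simp add: Qset_def)
      then show ?thesis
        using P knot_le[of pp p] knot_le[of q qq] dpq_le_span[of pp qq m] pq'
        by (simp add: lo_def hi_def)
    qed
    show "\<exists>P\<in>S. t \<in> {lo P..hi P}" if t: "t \<in> {x q - x p..2 * (x m - x 0)}" for t
    proof -
      obtain pp qq where "pp \<le> p" "q \<le> qq" "qq \<le> m" "x qq - x pp \<le> t" "t \<le> dpq x m pp qq"
        using t by (auto elim: short_pair_cover[OF pq])
      then show ?thesis by (intro bexI[of _ "(pp, qq)"]) (auto simp: S_def lo_def hi_def)
    qed
  qed (simp add: S_def)
  also have "\<dots> \<le> (\<Sum>P\<in>S. X)"
  proof (rule sum_mono)
    fix P assume "P \<in> S"
    moreover obtain pp qq where "P = (pp, qq)" by force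
    ultimately have "P = (pp, qq)" "pp \<le> p" "q \<le> qq" "qq \<le> m" by (auto simp: S_def)
    then show "integral {lo P..hi P} f \<le> X"
      unfolding lo_def hi_def f_def X_def using truncated_weight_integral_le_Lambda[OF \<omega> pq] by simp
  qed
  also have "\<dots> \<le> (real k + 1) ^ 2 * X"
  proof -
    have "card S = (p + 1) * (m + 1 - q)" by (simp add: S_def)
    also have "\<dots> \<le> (k + 1) * (k + 1)" using pq' m_eq by (intro mult_le_mono) auto
    finally have "real (card S) \<le> real ((k + 1) * (k + 1))" by (rule of_nat_mono)
    then have "real (card S) \<le> (real k + 1) ^ 2" by (simp add: power2_eq_square algebra_simps)
    moreover have "0 \<le> X"
      using span_pos Lambda_denom_pos[OF pq] Lambda_nonneg[OF \<omega>] by (simp add: X_def)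
    ultimately show ?thesis by (simp add: mult_right_mono)
  qed
  finally show ?thesis by (simp add: f_def X_def)
qed

lemma Lambda_pqr_short_le:
  assumes \<phi>: "inPhi \<phi>" and \<omega>: "inPhi \<omega>"
    and below_span: "\<And>t. 0 < t \<Longrightarrow> t \<le> x m - x 0 \<Longrightarrow>
      \<phi> t \<le> t ^ (k - 1) * integral {t..2 * (x m - x 0)} (\<lambda>u. \<omega> u / u ^ k)"
    and above_span: "\<And>t. x m - x 0 \<le> t \<Longrightarrow> t \<le> 2 * (x m - x 0) \<Longrightarrow> \<phi> t \<le> \<omega> t"
    and pq: "(p, q) \<in> Qset (m - 1) r"
  shows "Lambda_pqr x (m - 1) p q r \<phi> \<le> 2 ^ (k + 2) * (real k + 1) ^ 2 * (x m - x 0) * Lambda r x m \<omega>"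
proof -
  define a where "a = x q - x p"
  define b where "b = dpq x (m - 1) p q"
  define e where "e = q - p - r + 1"
  define Do where "Do = Lambda_denom x (m - 1) p q"
  have pq': "p + r + 1 \<le> q" "q \<le> m - 1" "q < m" using pq k_ge_2 m_eq by (auto simp: Qset_def)
  have a_pos: "0 < a" using Qset_less[OF pq] by (simp add: a_def)
  have short_all: "b \<le> 2 * a" if "k - e = 0"
  proof -
    have "p = 0" "q = m - 1" using that pq' m_eq by (auto simp: e_def)
    then show ?thesis by (simp add: a_def b_def dpq_0_n)
  qed
  have k_eq: "k = (k - e) + e" using pq' m_eq by (simp add: e_def)
  have "integral {a..b} (\<lambda>u. \<phi> u / u ^ e)
      \<le> 2 * integral {a..2 * (x m - x 0)} (truncated_weight \<omega> b (k - e) k)"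
    by (rule phi_integral_le[OF \<phi> \<omega> a_pos _ _ k_eq _ below_span above_span short_all])
      (use dpq_ge[OF pq] dpq_le_span[OF pq] in \<open>simp_all add: a_def b_def e_def\<close>)
  also have "\<dots> \<le> 2 * ((real k + 1) ^ 2 * (2 ^ (k + 1) * (x m - x 0) * Do * Lambda r x m \<omega>))"
    unfolding a_def b_def e_def Do_def
    by (intro mult_left_mono truncated_weight_integral_le[OF \<omega> pq]) simp
  finally have integral_le: "integral {a..b} (\<lambda>u. \<phi> u / u ^ e)
      \<le> 2 * ((real k + 1) ^ 2 * (2 ^ (k + 1) * (x m - x 0) * Do * Lambda r x m \<omega>))" .
  have Do_pos: "0 < Do" using Lambda_denom_pos[OF pq] by (simp add: Do_def)
  have "Lambda_pqr x (m - 1) p q r \<phi> = integral {a..b} (\<lambda>u. \<phi> u / u ^ e) / Do"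
    using pq' by (simp add: Lambda_pqr_eq a_def b_def e_def Do_def)
  also have "\<dots> \<le> 2 * ((real k + 1) ^ 2 * (2 ^ (k + 1) * (x m - x 0) * Do * Lambda r x m \<omega>)) / Do"
    by (rule divide_right_mono[OF integral_le]) (use Do_pos in simp)
  also have "\<dots> = 2 ^ (k + 2) * (real k + 1) ^ 2 * (x m - x 0) * Lambda r x m \<omega>"
    using Do_pos by (simp add: mult_ac)
  finally show ?thesis .
qed

lemma Lambda_short_le:
  assumes "inPhi \<phi>" "inPhi \<omega>"
    and "\<And>t. 0 < t \<Longrightarrow> t \<le> x m - x 0 \<Longrightarrow>
      \<phi> t \<le> t ^ (k - 1) * integral {t..2 * (x m - x 0)} (\<lambda>u. \<omega> u / u ^ k)"
    and "\<And>t. x m - x 0 \<le> t \<Longrightarrow> t \<le> 2 * (x m - x 0) \<Longrightarrow> \<phi> t \<le> \<omega> t"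
  shows "Lambda r x (m - 1) \<phi> \<le> 2 ^ (k + 2) * (real k + 1) ^ 2 * (x m - x 0) * Lambda r x m \<omega>"
  using k_ge_2 m_eq by (intro Lambda_le Lambda_pqr_short_le[OF assms]) auto

lemma reflected: "knots (\<lambda>i. - x (m - i)) m r k"
proof
  show "2 \<le> k" "m = r + k" by (fact k_ge_2 m_eq)+
  show "- x (m - i) \<le> - x (m - Suc i)" if "i < m" for i
    using step_le[of "m - Suc i"] that by (simp add: Suc_diff_Suc)
  show "- x (m - j) < - x (m - (j + r + 1))" if "j + r + 1 \<le> m" for j
  proof -
    define i where "i = m - (j + r + 1)"
    have "i + r + 1 = m - j" "i + r + 1 \<le> m" using that by (simp_all add: i_def)
    then have "x i < x (m - j)" using gap_less[of i] by metis
    then show ?thesis by (simp add: i_def)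
  qed
qed

end

theorem lemma3p3:
  fixes k :: nat
  assumes "k \<ge> 2"
  shows "\<exists>c>0. \<forall>(r::nat) (m::nat) (x::nat \<Rightarrow> real) \<phi> \<omega>.
     m = r + k \<longrightarrow>
     (\<forall>i<m. x i \<le> x (Suc i)) \<longrightarrow>
     (\<forall>j. j + r + 1 \<le> m \<longrightarrow> x j < x (j + r + 1)) \<longrightarrow>
     inPhi \<phi> \<longrightarrow> inPhi \<omega> \<longrightarrow>
     (\<forall>t\<in>{0<..(x m - x 0)}.
        \<phi> t \<le> t ^ (k - 1) * integral {t..2 * (x m - x 0)} (\<lambda>u. u powi (- int k) * \<omega> u)) \<longrightarrow>
     (\<forall>t\<in>{(x m - x 0)..2 * (x m - x 0)}. \<phi> t \<le> \<omega> t) \<longrightarrow>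
     Lambda r x (m - 1) \<phi> \<le> c * (x m - x 0) * Lambda r x m \<omega> \<and>
     Lambda r (\<lambda>i. x (Suc i)) (m - 1) \<phi> \<le> c * (x m - x 0) * Lambda r x m \<omega>"
proof (intro exI conjI allI impI)
  show "0 < (2::real) ^ (k + 2) * (real k + 1) ^ 2" by simp
  fix r m :: nat and x :: "nat \<Rightarrow> real" and \<phi> \<omega> :: "real \<Rightarrow> real"
  assume m_eq: "m = r + k" and step: "\<forall>i<m. x i \<le> x (Suc i)"
    and gap: "\<forall>j. j + r + 1 \<le> m \<longrightarrow> x j < x (j + r + 1)"
    and \<phi>: "inPhi \<phi>" and \<omega>: "inPhi \<omega>"
    and below: "\<forall>t\<in>{0<..(x m - x 0)}.
        \<phi> t \<le> t ^ (k - 1) * integral {t..2 * (x m - x 0)} (\<lambda>u. u powi (- int k) * \<omega> u)"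
    and above: "\<forall>t\<in>{(x m - x 0)..2 * (x m - x 0)}. \<phi> t \<le> \<omega> t"
  interpret knots x m r k using assms m_eq step gap by unfold_locales auto
  interpret reflected: knots "\<lambda>i. - x (m - i)" m r k by (rule reflected)
  have "(\<lambda>u. u powi (- int k) * \<omega> u) = (\<lambda>u. \<omega> u / u ^ k)"
    by (simp add: power_int_minus divide_inverse mult.commute)
  then have below': "\<phi> t \<le> t ^ (k - 1) * integral {t..2 * (x m - x 0)} (\<lambda>u. \<omega> u / u ^ k)"
    if "0 < t" "t \<le> x m - x 0" for t
    using below that by auto
  have above': "\<phi> t \<le> \<omega> t" if "x m - x 0 \<le> t" "t \<le> 2 * (x m - x 0)" for t
    using above that by auto
  show "Lambda r x (m - 1) \<phi> \<le> 2 ^ (k + 2) * (real k + 1) ^ 2 * (x m - x 0) * Lambda r x m \<omega>"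
    using Lambda_short_le[OF \<phi> \<omega> below' above'] .
  have reflected_span: "- x (m - m) - - x (m - 0) = x m - x 0" by simp
  have "Lambda r (\<lambda>i. x (Suc i)) (m - 1) \<phi> = Lambda r (\<lambda>i. - x (m - i)) (m - 1) \<phi>"
    using Lambda_tail_reflect[of r x "m - 1" \<phi>] assms m_eq by simp
  also have "\<dots> \<le> 2 ^ (k + 2) * (real k + 1) ^ 2 * (x m - x 0) * Lambda r (\<lambda>i. - x (m - i)) m \<omega>"
    using reflected.Lambda_short_le[OF \<phi> \<omega>, unfolded reflected_span, OF below' above'] .
  also have "Lambda r (\<lambda>i. - x (m - i)) m \<omega> = Lambda r x m \<omega>"
    by (rule Lambda_reflect[symmetric])
  finally show "Lambda r (\<lambda>i. x (Suc i)) (m - 1) \<phi>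
      \<le> 2 ^ (k + 2) * (real k + 1) ^ 2 * (x m - x 0) * Lambda r x m \<omega>" .
qed

end
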